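(* Let $k\ge1$ and $\alpha=(\alpha_{r,\ell})\in\mathbb{N}_0^{k\times k}$ with rows $\alpha_r=(\alpha_{r,1},\ldots,\alpha_{r,k})$. Then \[ \partial_M^{\alpha}\left[\frac{1}{\det(\mathbbm{1}_k+M)}\right]\Bigg|_{M=0}=\begin{cases}(-1)^{|\alpha|}\,|\alpha_1|!\cdots|\alpha_k|! & \text{if } \alpha_1+\cdots+\alpha_k=(|\alpha_1|,\ldots,|\alpha_k|),\\ 0 & \text{otherwise,}\end{cases} \] i.e. the derivative is nonzero exactly when, for every $r$, the $r$-th row sum of $\alpha$ equals its $r$-th column sum.
   Context: $M=(m_{r,\ell})\in\mathbb{C}^{k\times k}$ is a matrix variable, $\mathbbm{1}_k$ the identity, $\partial_M^\alpha=\prod_{r,\ell=1}^k\partial_{m_{r,\ell}}^{\alpha_{r,\ell}}$, $|\alpha_r|=\sum_\ell\alpha_{r,\ell}$, $|\alpha|=\sum_r|\alpha_r|$, and $\alpha_1+\cdots+\alpha_k$ is the componentwise sum of the rows (the vector of column sums). *)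

theory Defs
  imports "HOL-Analysis.Derivative" "Jordan_Normal_Form.Determinant"
begin

text \<open>Matrices M are functions nat => nat => complex, entries indexed by 0..k-1.
  The partial derivative with respect to the entry (r,l):\<close>
definition pd :: "nat \<Rightarrow> nat \<Rightarrow> ((nat \<Rightarrow> nat \<Rightarrow> complex) \<Rightarrow> complex)
                   \<Rightarrow> ((nat \<Rightarrow> nat \<Rightarrow> complex) \<Rightarrow> complex)" where
  "pd r l f = (\<lambda>M. deriv (\<lambda>z. f (M(r := (M r)(l := z)))) (M r l))"

definition mpd :: "nat \<Rightarrow> (nat \<Rightarrow> nat \<Rightarrow> nat) \<Rightarrow> ((nat \<Rightarrow> nat \<Rightarrow> complex) \<Rightarrow> complex)
                   \<Rightarrow> ((nat \<Rightarrow> nat \<Rightarrow> complex) \<Rightarrow> complex)" where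
  "mpd k \<alpha> f = foldr (\<lambda>(r, l) g. (pd r l ^^ \<alpha> r l) g)
                   [(r, l). r \<leftarrow> [0..<k], l \<leftarrow> [0..<k]] f"

definition inv_det :: "nat \<Rightarrow> (nat \<Rightarrow> nat \<Rightarrow> complex) \<Rightarrow> complex" where
  "inv_det k M = 1 / det (1\<^sub>m k + mat k k (\<lambda>(i, j). M i j))"

end

theory Submission
  imports Defs "HOL-Library.Multiset"
begin

(* Write A = 1 + M and B = A^-1.  The derivative in m_rl of (1/det A) * per B X Y, where per B X Y
   is the permanent of B with row indices X and column indices Y, is -(1/det A) * per B (l # X) (r + Y):
   the prefactor contributes -B_lr / det A and, by Sherman-Morrison, every entry B_ij contributes
   -B_ir B_lj.  Hence the derivative of order alpha is (-1)^|alpha| / det A times the permanent of B on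
   the column multiset and the row multiset of alpha.  At M = 0, B is the identity matrix, whose
   permanent on two multisets vanishes unless they agree, and otherwise is the product of the
   factorials of the multiplicities. *)

(* The permanent of the matrix (B x y) with rows indexed by the list X and columns by the multiset Y,
   counted with multiplicity; it is 0 unless length X = size Y. *)
fun permanent :: "('a \<Rightarrow> 'b \<Rightarrow> 'c::comm_semiring_1) \<Rightarrow> 'a list \<Rightarrow> 'b multiset \<Rightarrow> 'c" where
  "permanent B [] Y = (if Y = {#} then 1 else 0)"
| "permanent B (x # X) Y = (\<Sum>y\<in>#Y. B x y * permanent B X (Y - {#y#}))"

lemma sum_mset_remove_swap:
  fixes g :: "'a \<Rightarrow> 'a \<Rightarrow> 'b::comm_monoid_add"
  shows "(\<Sum>a\<in>#Y. \<Sum>b\<in>#Y - {#a#}. g a b) = (\<Sum>a\<in>#Y. \<Sum>b\<in>#Y - {#a#}. g b a)"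
proof (induction Y)
  case empty
  then show ?case by simp
next
  case (add c Y)
  have "(\<Sum>a\<in>#add_mset c Y. \<Sum>b\<in>#add_mset c Y - {#a#}. h a b)
      = (\<Sum>b\<in>#Y. h c b) + (\<Sum>a\<in>#Y. h a c) + (\<Sum>a\<in>#Y. \<Sum>b\<in>#Y - {#a#}. h a b)"
    for h :: "'a \<Rightarrow> 'a \<Rightarrow> 'b"
  proof -
    have "(\<Sum>a\<in>#Y. \<Sum>b\<in>#add_mset c Y - {#a#}. h a b) = (\<Sum>a\<in>#Y. h a c + (\<Sum>b\<in>#Y - {#a#}. h a b))"
      by (intro arg_cong[where f = sum_mset] image_mset_cong) (simp add: diff_union_swap2)
    then show ?thesis by (simp add: sum_mset.distrib add.assoc)
  qed
  from this[of g] this[of "\<lambda>a b. g b a"] add.IH show ?case by (simp add: ac_simps)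
qed

lemma permanent_Cons_add_mset:
  "permanent B (x # X) (add_mset y Y)
     = B x y * permanent B X Y + (\<Sum>y'\<in>#Y. B x y' * permanent B X (add_mset y (Y - {#y'#})))"
proof -
  have "(\<Sum>y'\<in>#Y. B x y' * permanent B X (add_mset y Y - {#y'#}))
      = (\<Sum>y'\<in>#Y. B x y' * permanent B X (add_mset y (Y - {#y'#})))"
    by (intro arg_cong[where f = sum_mset] image_mset_cong) (simp add: diff_union_swap2)
  then show ?thesis by simp
qed

lemma permanent_cong:
  "(\<And>x y. x \<in> set X \<Longrightarrow> y \<in># Y \<Longrightarrow> B x y = B' x y) \<Longrightarrow> permanent B X Y = permanent B' X Y"
proof (induction X arbitrary: Y)
  case Nil
  then show ?case by simp
next
  case (Cons x X)
  have "permanent B X (Y - {#y#}) = permanent B' X (Y - {#y#})" for y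
    using Cons by (meson in_diffD list.set_intros(2))
  then show ?case using Cons.prems by (auto intro!: arg_cong[where f = sum_mset] image_mset_cong)
qed

lemma permanent_kronecker:
  assumes "finite K" "set_mset Y \<subseteq> K"
  shows "permanent (\<lambda>i j. if i = j then 1 else 0) X Y
    = (if mset X = Y then (\<Prod>v\<in>K. of_nat (fact (count Y v))) else (0::'c::comm_semiring_1))"
  using assms(2)
proof (induction X arbitrary: Y)
  case Nil
  then show ?case by auto
next
  case (Cons x X)
  let ?\<delta> = "\<lambda>i j. if i = j then 1 else (0::'c)"
  have "permanent ?\<delta> (x # X) Y = (\<Sum>y\<in>#Y. if x = y then permanent ?\<delta> X (Y - {#y#}) else 0)"
    by (auto intro!: arg_cong[where f = sum_mset] image_mset_cong)
  also have "\<dots> = (\<Sum>y\<in>#Y. if x = y then permanent ?\<delta> X (Y - {#x#}) else 0)"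
    by (intro arg_cong[where f = sum_mset] image_mset_cong) simp
  also have "\<dots> = of_nat (count Y x) * permanent ?\<delta> X (Y - {#x#})"
    by (simp add: sum_mset_delta' mult.commute)
  finally have expand: "permanent ?\<delta> (x # X) Y = of_nat (count Y x) * permanent ?\<delta> X (Y - {#x#})" .
  show ?case
  proof (cases "x \<in># Y")
    case False
    then have "mset (x # X) \<noteq> Y" by auto
    with False expand show ?thesis by (simp add: not_in_iff)
  next
    case True
    have "x \<in> K" using True Cons.prems by auto
    have "set_mset (Y - {#x#}) \<subseteq> K" using Cons.prems by (meson in_diffD subset_iff)
    note IH = Cons.IH[OF this]
    have "(mset (x # X) = Y) = (mset X = Y - {#x#})"
      using True by (metis add_mset_remove_trivial insert_DiffM mset.simps(2))
    moreover have "of_nat (count Y x) * (\<Prod>v\<in>K. of_nat (fact (count (Y - {#x#}) v)))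
        = (\<Prod>v\<in>K. of_nat (fact (count Y v)) :: 'c)"
    proof -
      have "of_nat (fact (count Y x)) = (of_nat (count Y x) * of_nat (fact (count Y x - 1)) :: 'c)"
        using True by (simp add: fact_reduce)
      moreover have "(\<Prod>v\<in>K - {x}. of_nat (fact (count (Y - {#x#}) v)))
          = (\<Prod>v\<in>K - {x}. of_nat (fact (count Y v)) :: 'c)"
        by (intro prod.cong) auto
      ultimately show ?thesis
        using \<open>x \<in> K\<close> assms(1) by (simp add: prod.remove ac_simps)
    qed
    ultimately show ?thesis using expand IH by auto
  qed
qed

lemma sum_mset_negf: "(\<Sum>x\<in>#A. - f x) = - (\<Sum>x\<in>#A. f x :: 'a::ab_group_add)"
  by (induction A) simp_all

lemma has_field_derivative_sum_mset:
  "(\<And>y. y \<in># Y \<Longrightarrow> ((\<lambda>z. g z y) has_field_derivative g' y) (at x)) \<Longrightarrow>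
   ((\<lambda>z. \<Sum>y\<in>#Y. g z y) has_field_derivative (\<Sum>y\<in>#Y. g' y)) (at x)"
  by (induction Y) (auto intro!: DERIV_add)

lemma has_field_derivative_permanent_rank_one:
  fixes B :: "'a \<Rightarrow> 'a \<Rightarrow> 'c::real_normed_field"
  assumes deriv: "\<And>i j. ((\<lambda>z. Bz z i j) has_field_derivative - (B i r * B l j)) (at z0)"
    and at_z0: "Bz z0 = B"
  shows "((\<lambda>z. permanent (Bz z) X Y) has_field_derivative
           - (\<Sum>y\<in>#Y. B l y * permanent B X (add_mset r (Y - {#y#})))) (at z0)"
proof (induction X arbitrary: Y)
  case Nil
  then show ?case by simp
next
  case (Cons x X)
  define P where "P Z = permanent B X Z" for Z
  define S where "S a = B x a * (\<Sum>b\<in>#Y - {#a#}. B l b * P (add_mset r (Y - {#a#} - {#b#})))" for a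
  have "((\<lambda>z. permanent (Bz z) (x # X) Y) has_field_derivative
          (\<Sum>y\<in>#Y. - (B x r * B l y) * P (Y - {#y#}) - S y)) (at z0)"
    unfolding permanent.simps
    by (intro has_field_derivative_sum_mset DERIV_cong[OF DERIV_mult[OF deriv Cons.IH]])
      (simp only: at_z0 P_def S_def mult_minus_left mult_minus_right diff_conv_add_uminus mult.commute)
  moreover have "(\<Sum>y\<in>#Y. - (B x r * B l y) * P (Y - {#y#}) - S y)
      = - (\<Sum>y\<in>#Y. B l y * permanent B (x # X) (add_mset r (Y - {#y#})))"
  proof -
    have "(\<Sum>y\<in>#Y. - (B x r * B l y) * P (Y - {#y#}) - S y)
        = - ((\<Sum>y\<in>#Y. B x r * B l y * P (Y - {#y#})) + (\<Sum>y\<in>#Y. S y))"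
      by (simp add: sum_mset_negf[symmetric] sum_mset.distrib[symmetric])
    moreover have "(\<Sum>y\<in>#Y. S y)
        = (\<Sum>y\<in>#Y. \<Sum>y'\<in>#Y - {#y#}. B l y * (B x y' * P (add_mset r (Y - {#y#} - {#y'#}))))"
      unfolding S_def sum_mset_distrib_left by (subst sum_mset_remove_swap) (simp only: diff_right_commute mult_ac)
    moreover have "(\<Sum>y\<in>#Y. B l y * permanent B (x # X) (add_mset r (Y - {#y#})))
        = (\<Sum>y\<in>#Y. B x r * B l y * P (Y - {#y#}))
          + (\<Sum>y\<in>#Y. \<Sum>y'\<in>#Y - {#y#}. B l y * (B x y' * P (add_mset r (Y - {#y#} - {#y'#}))))"
      by (simp only: permanent_Cons_add_mset P_def distrib_left sum_mset.distrib sum_mset_distrib_left mult_ac)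
    ultimately show ?thesis by simp
  qed
  ultimately show ?case by simp
qed

definition add_entry :: "'a::monoid_add mat \<Rightarrow> nat \<Rightarrow> nat \<Rightarrow> 'a \<Rightarrow> 'a mat" where
  "add_entry A r l w = mat (dim_row A) (dim_col A) (\<lambda>(i, j). A $$ (i, j) + (if i = r \<and> j = l then w else 0))"

lemma dim_add_entry [simp]:
  "dim_row (add_entry A r l w) = dim_row A" "dim_col (add_entry A r l w) = dim_col A"
  unfolding add_entry_def by simp_all

lemma index_add_entry [simp]:
  "i < dim_row A \<Longrightarrow> j < dim_col A \<Longrightarrow>
    add_entry A r l w $$ (i, j) = A $$ (i, j) + (if i = r \<and> j = l then w else 0)"
  unfolding add_entry_def by simp

lemma add_entry_carrier_mat: "A \<in> carrier_mat m n \<Longrightarrow> add_entry A r l w \<in> carrier_mat m n"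
  by auto

lemma cofactor_add_entry:
  assumes "A \<in> carrier_mat k k" "r < k"
  shows "cofactor (add_entry A r l w) r j = cofactor A r j"
proof -
  have "mat_delete (add_entry A r l w) r j = mat_delete A r j"
    using assms by (intro eq_matI) (auto simp: mat_delete_def insert_index_def)
  then show ?thesis unfolding cofactor_def by simp
qed

lemma det_add_entry:
  fixes A :: "'a::comm_ring_1 mat"
  assumes A: "A \<in> carrier_mat k k" and "r < k" "l < k"
  shows "det (add_entry A r l w) = det A + w * cofactor A r l"
proof -
  have "det (add_entry A r l w) = (\<Sum>j<k. add_entry A r l w $$ (r, j) * cofactor (add_entry A r l w) r j)"
    using A \<open>r < k\<close> by (intro laplace_expansion_row add_entry_carrier_mat)
  also have "\<dots> = (\<Sum>j<k. A $$ (r, j) * cofactor A r j + (if j = l then w * cofactor A r l else 0))"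
    using assms by (intro sum.cong) (auto simp: cofactor_add_entry distrib_right)
  also have "\<dots> = det A + w * cofactor A r l"
    using assms by (simp add: sum.distrib laplace_expansion_row[OF A \<open>r < k\<close>])
  finally show ?thesis .
qed

definition inverse_entry :: "'a::field mat \<Rightarrow> nat \<Rightarrow> nat \<Rightarrow> 'a" where
  "inverse_entry A i j = cofactor A j i / det A"

lemma
  fixes A :: "'a::field mat"
  assumes A: "A \<in> carrier_mat k k" and "det A \<noteq> 0" and ij: "i < k" "j < k"
  shows mult_inverse_entry: "(\<Sum>t<k. A $$ (i, t) * inverse_entry A t j) = (if i = j then 1 else 0)"
    and inverse_entry_mult: "(\<Sum>t<k. inverse_entry A i t * A $$ (t, j)) = (if i = j then 1 else 0)"
proof -
  have "(A * adj_mat A) $$ (i, j) = (\<Sum>t<k. A $$ (i, t) * cofactor A j t)"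
    and "(adj_mat A * A) $$ (i, j) = (\<Sum>t<k. cofactor A t i * A $$ (t, j))"
    using A ij by (auto simp: adj_mat_def scalar_prod_def atLeast0LessThan intro!: sum.cong)
  then show "(\<Sum>t<k. A $$ (i, t) * inverse_entry A t j) = (if i = j then 1 else 0)"
    and "(\<Sum>t<k. inverse_entry A i t * A $$ (t, j)) = (if i = j then 1 else 0)"
    using adj_mat(2,3)[OF A] assms
    by (auto simp: inverse_entry_def sum_divide_distrib[symmetric])
qed

lemma det_add_entry_inverse_entry:
  fixes A :: "'a::field mat"
  assumes "A \<in> carrier_mat k k" "det A \<noteq> 0" "r < k" "l < k"
  shows "det (add_entry A r l w) = det A * (1 + w * inverse_entry A l r)"
  using assms by (simp add: det_add_entry inverse_entry_def distrib_left)

lemma inverse_entry_eqI: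
  fixes A :: "'a::field mat"
  assumes A: "A \<in> carrier_mat k k" "det A \<noteq> 0"
    and right_inverse: "\<And>i j. i < k \<Longrightarrow> j < k \<Longrightarrow> (\<Sum>t<k. A $$ (i, t) * C t j) = (if i = j then 1 else 0)"
    and ij: "i < k" "j < k"
  shows "inverse_entry A i j = C i j"
proof -
  have "inverse_entry A i j = (\<Sum>s<k. if s = j then inverse_entry A i s else 0)"
    using ij by simp
  also have "\<dots> = (\<Sum>s<k. inverse_entry A i s * (\<Sum>t<k. A $$ (s, t) * C t j))"
    using ij right_inverse by (intro sum.cong) auto
  also have "\<dots> = (\<Sum>t<k. (\<Sum>s<k. inverse_entry A i s * A $$ (s, t)) * C t j)"
    unfolding sum_distrib_left sum_distrib_right mult.assoc by (rule sum.swap)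
  also have "\<dots> = (\<Sum>t<k. if i = t then C t j else 0)"
    using inverse_entry_mult[OF A ij(1)] by (intro sum.cong) auto
  also have "\<dots> = C i j"
    using ij by simp
  finally show ?thesis .
qed

lemma inverse_entry_one_mat:
  assumes "i < k" "j < k"
  shows "inverse_entry (1\<^sub>m k :: 'a::field mat) i j = (if i = j then 1 else 0)"
proof (rule inverse_entry_eqI[OF one_carrier_mat _ _ assms])
  fix i j assume "i < k" "j < k"
  then have "(\<Sum>t<k. 1\<^sub>m k $$ (i, t) * (if t = j then 1 else 0)) = (\<Sum>t<k. if t = j then 1\<^sub>m k $$ (i, t) else (0::'a))"
    by (intro sum.cong) auto
  then show "(\<Sum>t<k. 1\<^sub>m k $$ (i, t) * (if t = j then 1 else 0)) = (if i = j then 1 else (0::'a))"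
    using \<open>i < k\<close> \<open>j < k\<close> by simp
qed simp

lemma inverse_entry_add_entry:
  fixes A :: "'a::field mat"
  assumes A: "A \<in> carrier_mat k k" "det A \<noteq> 0" and rl: "r < k" "l < k"
    and nz: "1 + w * inverse_entry A l r \<noteq> 0" and ij: "i < k" "j < k"
  shows "inverse_entry (add_entry A r l w) i j
    = inverse_entry A i j - w * inverse_entry A i r * inverse_entry A l j / (1 + w * inverse_entry A l r)"
proof -
  define B where "B = inverse_entry A"
  define q where "q = w / (1 + w * B l r)"
  define C where "C t j = B t j - q * B t r * B l j" for t j
  have "(\<Sum>t<k. add_entry A r l w $$ (i, t) * C t j) = (if i = j then 1 else 0)"
    if ij: "i < k" "j < k" for i j
  proof -
    have "(\<Sum>t<k. add_entry A r l w $$ (i, t) * C t j)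
        = (\<Sum>t<k. A $$ (i, t) * C t j + (if t = l then if i = r then w * C l j else 0 else 0))"
      using A ij by (intro sum.cong) (auto simp: distrib_right)
    also have "\<dots> = (\<Sum>t<k. A $$ (i, t) * C t j) + (if i = r then w * C l j else 0)"
      using rl by (simp add: sum.distrib)
    also have "(\<Sum>t<k. A $$ (i, t) * C t j)
        = (\<Sum>t<k. A $$ (i, t) * B t j) - q * B l j * (\<Sum>t<k. A $$ (i, t) * B t r)"
      by (simp add: C_def right_diff_distrib sum_subtractf sum_distrib_left mult_ac)
    also have "w * C l j = q * B l j"
      using nz unfolding C_def q_def B_def by (simp add: field_simps)
    finally show ?thesis
      using mult_inverse_entry[OF A ij] mult_inverse_entry[OF A ij(1) rl(1)] unfolding B_def by auto
  qed
  moreover have "det (add_entry A r l w) \<noteq> 0"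
    using A rl nz by (simp add: det_add_entry_inverse_entry)
  ultimately have "inverse_entry (add_entry A r l w) i j = C i j"
    using A ij by (intro inverse_entry_eqI add_entry_carrier_mat) auto
  then show ?thesis unfolding C_def q_def B_def by simp
qed

definition one_plus_mat :: "nat \<Rightarrow> (nat \<Rightarrow> nat \<Rightarrow> complex) \<Rightarrow> complex mat" where
  "one_plus_mat k M = 1\<^sub>m k + mat k k (\<lambda>(i, j). M i j)"

lemma one_plus_mat_carrier_mat: "one_plus_mat k M \<in> carrier_mat k k"
  unfolding one_plus_mat_def by simp

lemma inv_det_one_plus_mat: "inv_det k M = 1 / det (one_plus_mat k M)"
  unfolding inv_det_def one_plus_mat_def ..

lemma one_plus_mat_update:
  assumes "r < k" "l < k"
  shows "one_plus_mat k (M(r := (M r)(l := z))) = add_entry (one_plus_mat k M) r l (z - M r l)"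
  using assms by (intro eq_matI) (auto simp: one_plus_mat_def)

lemma inv_det_permanent_update_entry:
  fixes k r l :: nat and M :: "nat \<Rightarrow> nat \<Rightarrow> complex" and z :: complex
  defines "B \<equiv> inverse_entry (one_plus_mat k M)" and "M' \<equiv> M(r := (M r)(l := z))"
    and "w \<equiv> z - M r l"
  assumes d: "det (one_plus_mat k M) \<noteq> 0" and X: "set X \<subseteq> {..<k}" and Y: "set_mset Y \<subseteq> {..<k}"
    and rl: "r < k" "l < k" and nz: "1 + w * B l r \<noteq> 0"
  shows "det (one_plus_mat k M') \<noteq> 0"
    and "inv_det k M' * permanent (inverse_entry (one_plus_mat k M')) X Y
      = inv_det k M / (1 + w * B l r) * permanent (\<lambda>i j. B i j - w * B i r * B l j / (1 + w * B l r)) X Y"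
proof -
  have A: "one_plus_mat k M \<in> carrier_mat k k"
    by (rule one_plus_mat_carrier_mat)
  have M': "one_plus_mat k M' = add_entry (one_plus_mat k M) r l w"
    unfolding M'_def w_def using rl by (rule one_plus_mat_update)
  have det: "det (one_plus_mat k M') = det (one_plus_mat k M) * (1 + w * B l r)"
    unfolding M' B_def using A d rl by (rule det_add_entry_inverse_entry)
  then show "det (one_plus_mat k M') \<noteq> 0"
    using d nz by simp
  have "permanent (inverse_entry (one_plus_mat k M')) X Y
      = permanent (\<lambda>i j. B i j - w * B i r * B l j / (1 + w * B l r)) X Y"
    using A d rl nz X Y unfolding M' B_def
    by (intro permanent_cong inverse_entry_add_entry) auto
  then show "inv_det k M' * permanent (inverse_entry (one_plus_mat k M')) X Y
      = inv_det k M / (1 + w * B l r) * permanent (\<lambda>i j. B i j - w * B i r * B l j / (1 + w * B l r)) X Y"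
    unfolding inv_det_one_plus_mat det by simp
qed

(* On the line m_rl := z, Sherman-Morrison turns the inverse of 1 + M into the rational function
   Bz below, with derivative -B e_r e_l^T B at z = m_rl, while 1/det has derivative -B_lr/det.
   By permanent_Cons_add_mset the two contributions add l to X and r to Y. *)
lemma pd_inv_det_permanent:
  assumes G: "\<And>M. det (one_plus_mat k M) \<noteq> 0 \<Longrightarrow>
      G M = s * inv_det k M * permanent (inverse_entry (one_plus_mat k M)) X Y"
    and X: "set X \<subseteq> {..<k}" and Y: "set_mset Y \<subseteq> {..<k}"
    and rl: "r < k" "l < k" and d: "det (one_plus_mat k M) \<noteq> 0"
  shows "pd r l G M
    = - s * inv_det k M * permanent (inverse_entry (one_plus_mat k M)) (l # X) (add_mset r Y)"
proof -
  define B where "B = inverse_entry (one_plus_mat k M)"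
  define c where "c = B l r"
  define z0 where "z0 = M r l"
  define Bz where "Bz z i j = B i j - (z - z0) * B i r * B l j / (1 + (z - z0) * c)" for z i j
  define H where "H z = s * (inv_det k M / (1 + (z - z0) * c)) * permanent (Bz z) X Y" for z
  define T where "T = (\<Sum>y\<in>#Y. B l y * permanent B X (add_mset r (Y - {#y#})))"
  have G_line: "G (M(r := (M r)(l := z))) = H z" if "1 + (z - z0) * c \<noteq> 0" for z
    using G[OF inv_det_permanent_update_entry(1)] inv_det_permanent_update_entry(2)
      d X Y rl that
    unfolding H_def Bz_def B_def c_def z0_def by (simp add: mult.assoc)
  have Bz_z0: "Bz z0 = B"
    by (intro ext) (simp add: Bz_def)
  have "((\<lambda>z. s * (inv_det k M / (1 + (z - z0) * c))) has_field_derivative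
      - s * inv_det k M * c) (at z0)"
    by (auto intro!: derivative_eq_intros)
  moreover have "((\<lambda>z. permanent (Bz z) X Y) has_field_derivative - T) (at z0)"
    unfolding T_def by (rule has_field_derivative_permanent_rank_one)
      (auto simp: Bz_def intro!: ext derivative_eq_intros)
  ultimately have "(H has_field_derivative
      - s * inv_det k M * c * permanent (Bz z0) X Y + - T * (s * (inv_det k M / (1 + (z0 - z0) * c)))) (at z0)"
    unfolding H_def by (rule DERIV_mult)
  moreover have "permanent B (l # X) (add_mset r Y) = c * permanent B X Y + T"
    unfolding permanent_Cons_add_mset T_def c_def ..
  ultimately have "(H has_field_derivative - s * inv_det k M * permanent B (l # X) (add_mset r Y)) (at z0)"
    unfolding Bz_z0 by (simp add: algebra_simps)
  then have "((\<lambda>z. G (M(r := (M r)(l := z)))) has_field_derivative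
      - s * inv_det k M * permanent B (l # X) (add_mset r Y)) (at z0)"
    by (rule has_field_derivative_transform_within_open[where S = "{z. 1 + (z - z0) * c \<noteq> 0}"])
      (auto intro!: open_Collect_neq continuous_intros simp: G_line)
  then show ?thesis
    unfolding pd_def z0_def B_def by (rule DERIV_imp_deriv)
qed

definition pd_seq :: "(nat \<times> nat) list \<Rightarrow> ((nat \<Rightarrow> nat \<Rightarrow> complex) \<Rightarrow> complex)
    \<Rightarrow> ((nat \<Rightarrow> nat \<Rightarrow> complex) \<Rightarrow> complex)" where
  "pd_seq Es f = foldr (\<lambda>(r, l). pd r l) Es f"

lemma pd_seq_simps [simp]:
  "pd_seq [] f = f"
  "pd_seq ((r, l) # Es) f = pd r l (pd_seq Es f)"
  unfolding pd_seq_def by simp_all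

lemma pd_seq_append: "pd_seq (Es @ Es') f = pd_seq Es (pd_seq Es' f)"
  unfolding pd_seq_def by simp

lemma funpow_pd_eq_pd_seq: "(pd r l ^^ n) f = pd_seq (replicate n (r, l)) f"
  by (induction n) auto

lemma pd_seq_inv_det:
  assumes "set Es \<subseteq> {..<k} \<times> {..<k}" and "det (one_plus_mat k M) \<noteq> 0"
  shows "pd_seq Es (inv_det k) M
    = (-1) ^ length Es * inv_det k M
      * permanent (inverse_entry (one_plus_mat k M)) (map snd Es) (mset (map fst Es))"
  using assms
proof (induction Es arbitrary: M)
  case Nil
  then show ?case by simp
next
  case (Cons e Es)
  obtain r l where e: "e = (r, l)" by fastforce
  have "pd r l (pd_seq Es (inv_det k)) M
    = - ((-1) ^ length Es) * inv_det k M
      * permanent (inverse_entry (one_plus_mat k M)) (l # map snd Es) (add_mset r (mset (map fst Es)))"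
    using Cons e by (intro pd_inv_det_permanent) auto
  then show ?case using e by simp
qed

definition entry_list :: "nat \<Rightarrow> (nat \<Rightarrow> nat \<Rightarrow> nat) \<Rightarrow> (nat \<times> nat) list" where
  "entry_list k \<alpha> = concat (map (\<lambda>(r, l). replicate (\<alpha> r l) (r, l)) [(r, l). r \<leftarrow> [0..<k], l \<leftarrow> [0..<k]])"

lemma mpd_eq_pd_seq: "mpd k \<alpha> f = pd_seq (entry_list k \<alpha>) f"
proof -
  have "foldr (\<lambda>(r, l) g. (pd r l ^^ \<alpha> r l) g) L f
      = pd_seq (concat (map (\<lambda>(r, l). replicate (\<alpha> r l) (r, l)) L)) f" for L
    by (induction L) (auto simp: funpow_pd_eq_pd_seq pd_seq_append)
  then show ?thesis unfolding mpd_def entry_list_def .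
qed

lemma entry_list_subset: "set (entry_list k \<alpha>) \<subseteq> {..<k} \<times> {..<k}"
  unfolding entry_list_def by auto

lemma sum_list_map_concat: "(\<Sum>x\<leftarrow>concat xss. f x) = (\<Sum>xs\<leftarrow>xss. \<Sum>x\<leftarrow>xs. f x)"
  by (induction xss) auto

lemma mset_map_entry_list:
  "mset (map h (entry_list k \<alpha>)) = (\<Sum>r<k. \<Sum>l<k. replicate_mset (\<alpha> r l) (h (r, l)))"
proof -
  have "mset (map h (concat (map (\<lambda>(r, l). replicate (\<alpha> r l) (r, l)) L)))
      = (\<Sum>(r, l)\<leftarrow>L. replicate_mset (\<alpha> r l) (h (r, l)))" for L
    by (induction L) auto
  then show ?thesis
    unfolding entry_list_def
    by (simp add: sum_list_map_concat comp_def interv_sum_list_conv_sum_set_nat atLeast0LessThan)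
qed

lemma length_entry_list: "length (entry_list k \<alpha>) = (\<Sum>r<k. \<Sum>l<k. \<alpha> r l)"
  using arg_cong[OF mset_map_entry_list[of "\<lambda>x. x"], of size] by (simp add: size_multiset_sum)

lemma count_rows_entry_list:
  "count (mset (map fst (entry_list k \<alpha>))) v = (if v < k then \<Sum>l<k. \<alpha> v l else 0)"
proof -
  have "(\<Sum>l<k. if v = r then \<alpha> r l else 0) = (if v = r then \<Sum>l<k. \<alpha> r l else 0)" for r
    by simp
  then show ?thesis
    unfolding mset_map_entry_list count_sum count_replicate_mset by simp
qed

lemma count_cols_entry_list:
  "count (mset (map snd (entry_list k \<alpha>))) v = (if v < k then \<Sum>s<k. \<alpha> s v else 0)"
  unfolding mset_map_entry_list count_sum count_replicate_mset by simp

lemma mpd_inv_det_zero: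
  "mpd k \<alpha> (inv_det k) (\<lambda>_ _. 0) = (-1) ^ length (entry_list k \<alpha>)
    * permanent (\<lambda>i j. if i = j then 1 else 0) (map snd (entry_list k \<alpha>)) (mset (map fst (entry_list k \<alpha>)))"
proof -
  have one: "one_plus_mat k (\<lambda>_ _. 0) = 1\<^sub>m k"
    by (intro eq_matI) (auto simp: one_plus_mat_def)
  have "permanent (inverse_entry (1\<^sub>m k)) (map snd (entry_list k \<alpha>)) (mset (map fst (entry_list k \<alpha>)))
      = permanent (\<lambda>i j. if i = j then 1 else 0) (map snd (entry_list k \<alpha>)) (mset (map fst (entry_list k \<alpha>)))"
    using entry_list_subset[of k \<alpha>] by (intro permanent_cong inverse_entry_one_mat) auto
  then show ?thesis
    using pd_seq_inv_det[OF entry_list_subset[of k \<alpha>], where M = "\<lambda>_ _. 0"]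
    unfolding mpd_eq_pd_seq one inv_det_one_plus_mat by simp
qed

theorem mainTheorem2:
  fixes k :: nat and \<alpha> :: "nat \<Rightarrow> nat \<Rightarrow> nat"
  assumes "k \<ge> 1"
  shows "mpd k \<alpha> (inv_det k) (\<lambda>_ _. 0) =
    (if (\<forall>r<k. (\<Sum>s<k. \<alpha> s r) = (\<Sum>l<k. \<alpha> r l))
     then (-1) ^ (\<Sum>r<k. \<Sum>l<k. \<alpha> r l) * (\<Prod>r<k. of_nat (fact (\<Sum>l<k. \<alpha> r l)))
     else 0)"
proof -
  define X where "X = map snd (entry_list k \<alpha>)"
  define Y where "Y = mset (map fst (entry_list k \<alpha>))"
  have "set_mset Y \<subseteq> {..<k}"
    using entry_list_subset[of k \<alpha>] unfolding Y_def by auto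
  then have "mpd k \<alpha> (inv_det k) (\<lambda>_ _. 0)
      = (-1) ^ length (entry_list k \<alpha>) * (if mset X = Y then \<Prod>v<k. of_nat (fact (count Y v)) else 0)"
    unfolding mpd_inv_det_zero X_def[symmetric] Y_def[symmetric] by (subst permanent_kronecker) auto
  moreover have "(mset X = Y) = (\<forall>r<k. (\<Sum>s<k. \<alpha> s r) = (\<Sum>l<k. \<alpha> r l))"
    unfolding multiset_eq_iff X_def Y_def count_rows_entry_list count_cols_entry_list by auto
  ultimately show ?thesis
    unfolding Y_def length_entry_list count_rows_entry_list by simp
qed

end
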